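(* Let $b\ge1$ and $1\le a\le b$ be integers, and put $s=\tfrac{2a-1}{2}$. Let $V:\mathbb{C}^2\to\mathcal{H}_j$ be the encoding isometry of a spin code that is $(\mathsf{BD}_{2b},\delta_a)$-covariant, i.e. $D^j(g)V=V\delta_a(g)$ for all $g\in\mathsf{BD}_{2b}$, and let $|\bar0\rangle=V|0\rangle$, $|\bar1\rangle=V|1\rangle$. Then $\operatorname{supp}|\bar0\rangle\subset s+2b\mathbb{Z}$ and $\operatorname{supp}|\bar1\rangle=-\operatorname{supp}|\bar0\rangle$.
   Context: $\mathcal{H}_j$ is the spin-$j$ irrep of $\mathrm{SU}(2)$ with $J_z$-eigenbasis $|j,m\rangle$, $|m|\le j$, and $D^j(g)$ the action of $g$; in particular $D^j(\mathsf{Ph}(\alpha))|j,m\rangle=e^{-i\alpha m}|j,m\rangle$ and $D^j(\mathsf{X})|j,m\rangle=e^{-i\pi j}|j,-m\rangle$. For $|\psi\rangle=\sum_m\alpha_m|j,m\rangle$, $\operatorname{supp}|\psi\rangle=\{m:\alpha_m\ne0\}$. Here $\mathsf{X}=\begin{pmatrix}0&-i\\-i&0\end{pmatrix}$, $\mathsf{Z}=\begin{pmatrix}-i&0\\0&i\end{pmatrix}$, $\mathsf{Ph}(\alpha)=\mathrm{diag}(e^{-i\alpha/2},e^{i\alpha/2})$, and $\mathsf{BD}_{2b}=\langle\mathsf{X},\mathsf{Z},\mathsf{Ph}(\pi/b)\rangle$ (binary dihedral group of order $8b$). For $1\le a\le b$, $\delta_a$ is the two-dimensional irreducible representation of $\mathsf{BD}_{2b}$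 with $\delta_a(\mathsf{X})=\mathsf{X}$ and $\delta_a(\mathsf{Ph}(\pi/b))=\mathsf{Ph}(\pi/b)^{2a-1}$. *)

theory Defs
  imports "HOL-Analysis.Analysis"
begin

text \<open>Spin-j irrep H_j: a state is given by its coefficient function m -> alpha_m
  on the J_z-eigenbasis |j,m>, where m ranges over {-j, -j+1, ..., j}.\<close>

definition spin_ms :: "real \<Rightarrow> real set" where
  "spin_ms j = {m. \<exists>k::nat. real k \<le> 2 * j \<and> m = real k - j}"

definition spin_space :: "real \<Rightarrow> (real \<Rightarrow> complex) set" where
  "spin_space j = {\<psi>. \<forall>m. m \<notin> spin_ms j \<longrightarrow> \<psi> m = 0}"

definition spin_inner :: "real \<Rightarrow> (real \<Rightarrow> complex) \<Rightarrow> (real \<Rightarrow> complex) \<Rightarrow> complex" where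
  "spin_inner j \<psi> \<phi> = (\<Sum>m\<in>spin_ms j. cnj (\<psi> m) * \<phi> m)"

definition supp :: "(real \<Rightarrow> complex) \<Rightarrow> real set" where
  "supp \<psi> = {m. \<psi> m \<noteq> 0}"

definition D_Ph :: "real \<Rightarrow> real \<Rightarrow> (real \<Rightarrow> complex) \<Rightarrow> (real \<Rightarrow> complex)" where
  "D_Ph j \<alpha> \<psi> = (\<lambda>m. exp (- \<i> * complex_of_real (\<alpha> * m)) * \<psi> m)"

definition D_X :: "real \<Rightarrow> (real \<Rightarrow> complex) \<Rightarrow> (real \<Rightarrow> complex)" where
  "D_X j \<psi> = (\<lambda>m. exp (- \<i> * complex_of_real (pi * j)) * \<psi> (- m))"

definition Ph_mat :: "real \<Rightarrow> complex^2^2" where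
  "Ph_mat \<alpha> = (\<chi> r c. if r = c then (if r = 1 then exp (- \<i> * complex_of_real (\<alpha> / 2))
                                          else exp (\<i> * complex_of_real (\<alpha> / 2))) else 0)"

definition X_mat :: "complex^2^2" where
  "X_mat = (\<chi> r c. if r = c then 0 else - \<i>)"

definition encode :: "(real \<Rightarrow> complex) \<Rightarrow> (real \<Rightarrow> complex) \<Rightarrow> complex^2 \<Rightarrow> (real \<Rightarrow> complex)" where
  "encode c0 c1 x = (\<lambda>m. x $ 1 * c0 m + x $ 2 * c1 m)"

text \<open>V is an isometry iff its columns are orthonormal.\<close>

definition is_isometry_code :: "real \<Rightarrow> (real \<Rightarrow> complex) \<Rightarrow> (real \<Rightarrow> complex) \<Rightarrow> bool" where
  "is_isometry_code j c0 c1 \<longleftrightarrow> c0 \<in> spin_space j \<and> c1 \<in> spin_space j \<and>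
     spin_inner j c0 c0 = 1 \<and> spin_inner j c1 c1 = 1 \<and> spin_inner j c0 c1 = 0"

text \<open>BD_{2b} = <X, Z, Ph(pi/b)> consists exactly of the elements Ph(k pi/b) and
  X Ph(k pi/b), k in Z (Z = Ph(pi)).  D^j is a homomorphism, so
  D^j(X Ph(alpha)) = D^j(X) D^j(Ph(alpha)); and delta_a(Ph(k pi/b)) = Ph(pi/b)^((2a-1)k)
  = Ph((2a-1) k pi/b), delta_a(X Ph(k pi/b)) = X Ph((2a-1) k pi/b).\<close>

definition BD_covariant :: "real \<Rightarrow> nat \<Rightarrow> nat \<Rightarrow> (complex^2 \<Rightarrow> (real \<Rightarrow> complex)) \<Rightarrow> bool" where
  "BD_covariant j b a V \<longleftrightarrow>
     (\<forall>k::int. \<forall>x::complex^2.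
        D_Ph j (real_of_int k * pi / real b) (V x)
          = V (Ph_mat ((2 * real a - 1) * real_of_int k * pi / real b) *v x)
      \<and> D_X j (D_Ph j (real_of_int k * pi / real b) (V x))
          = V ((X_mat ** Ph_mat ((2 * real a - 1) * real_of_int k * pi / real b)) *v x))"

end

theory Submission
  imports Defs
begin

text \<open>Covariance under Ph(pi/b) makes |0> an eigenvector of D^j(Ph(pi/b)) with eigenvalue
  exp(-i pi s/b); as this operator multiplies |j,m> by exp(-i pi m/b), every m in the support
  satisfies m = s (mod 2b). Covariance under X makes |1> a nonzero multiple of D^j(X)|0>,
  which reflects the support.\<close>

lemma encode_axis_1: "encode c0 c1 (axis 1 c) = (\<lambda>m. c * c0 m)"
  by (simp add: encode_def axis_def)

lemma encode_axis_2: "encode c0 c1 (axis 2 c) = (\<lambda>m. c * c1 m)"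
  by (simp add: encode_def axis_def)

lemma Ph_mat_mult_axis_1: "Ph_mat \<alpha> *v axis 1 c = axis 1 (exp (- \<i> * complex_of_real (\<alpha> / 2)) * c)"
  by (simp add: Ph_mat_def axis_def matrix_vector_mult_def vec_eq_iff sum_2 forall_2)

lemma Ph_mat_0: "Ph_mat 0 = mat 1"
  by (simp add: Ph_mat_def mat_def vec_eq_iff)

lemma X_mat_mult_axis_1: "X_mat *v axis 1 c = axis 2 (- \<i> * c)"
  by (simp add: X_mat_def axis_def matrix_vector_mult_def vec_eq_iff sum_2 forall_2)

lemma D_Ph_0 [simp]: "D_Ph j 0 \<psi> = \<psi>"
  by (simp add: D_Ph_def)

lemma supp_D_X: "supp (D_X j \<psi>) = uminus ` supp \<psi>"
  by (force simp: supp_def D_X_def intro: image_eqI[where x = "- _"])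

lemma supp_scale: "c \<noteq> 0 \<Longrightarrow> supp (\<lambda>m. c * \<psi> m) = supp \<psi>"
  by (simp add: supp_def)

lemma supp_subset_of_D_Ph_eigenvector:
  assumes "\<beta> \<noteq> 0" and "D_Ph j \<beta> \<psi> = (\<lambda>m. exp (- \<i> * complex_of_real \<gamma>) * \<psi> m)"
  shows "supp \<psi> \<subseteq> {\<gamma> / \<beta> + 2 * pi / \<beta> * real_of_int z | z. True}"
proof
  fix m assume "m \<in> supp \<psi>"
  then have "exp (- \<i> * complex_of_real (\<beta> * m)) = exp (- \<i> * complex_of_real \<gamma>)"
    using fun_cong[OF assms(2), of m] by (simp add: supp_def D_Ph_def)
  then obtain n :: int where "- \<i> * complex_of_real (\<beta> * m)
      = - \<i> * complex_of_real \<gamma> + of_int (2 * n) * pi * \<i>"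
    by (auto simp: exp_eq)
  then have "\<beta> * m = \<gamma> - 2 * pi * real_of_int n"
    by (simp add: complex_eq_iff algebra_simps)
  then have "m = \<gamma> / \<beta> + 2 * pi / \<beta> * real_of_int (- n)"
    using assms(1) by (simp add: field_simps)
  then show "m \<in> {\<gamma> / \<beta> + 2 * pi / \<beta> * real_of_int z | z. True}"
    by blast
qed

theorem lemma1:
  fixes b a :: nat and j :: real and c0 c1 :: "real \<Rightarrow> complex"
  assumes "1 \<le> b" and "1 \<le> a" and "a \<le> b"
    and "2 * j \<in> \<nat>"
    and "is_isometry_code j c0 c1"
    and "BD_covariant j b a (encode c0 c1)"
  shows "supp c0 \<subseteq> {(2 * real a - 1) / 2 + 2 * real b * real_of_int z | z. True}
    \<and> supp c1 = uminus ` supp c0"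
proof
  have b_pos: "real b > 0"
    using assms(1) by simp
  have "D_Ph j (pi / real b) c0 = (\<lambda>m. exp (- \<i> * complex_of_real ((2 * real a - 1) * pi / real b / 2)) * c0 m)"
    using assms(6)[unfolded BD_covariant_def, rule_format, of 1 "axis 1 1"]
    by (simp add: Ph_mat_mult_axis_1 encode_axis_1)
  then have "supp c0 \<subseteq> {(2 * real a - 1) * pi / real b / 2 / (pi / real b)
      + 2 * pi / (pi / real b) * real_of_int z | z. True}"
    by (rule supp_subset_of_D_Ph_eigenvector[rotated]) (use b_pos in simp)
  also have "(2 * real a - 1) * pi / real b / 2 / (pi / real b) = (2 * real a - 1) / 2"
    using b_pos by simp
  also have "2 * pi / (pi / real b) = 2 * real b"
    using b_pos by simp
  finally show "supp c0 \<subseteq> {(2 * real a - 1) / 2 + 2 * real b * real_of_int z | z. True}" .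
next
  have "D_X j c0 = (\<lambda>m. - \<i> * c1 m)"
    using assms(6)[unfolded BD_covariant_def, rule_format, of 0 "axis 1 1"]
    by (simp add: Ph_mat_0 X_mat_mult_axis_1 encode_axis_1 encode_axis_2)
  then show "supp c1 = uminus ` supp c0"
    using supp_D_X[of j c0] supp_scale[of "- \<i>" c1] by simp
qed

end
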